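(* Let $\phi_2$ be a topological flow on a compact metric space $(M_2,\mathrm{dist}_2)$ whose limit set $L(\phi_2)$ is a finite set of singularities, each Lyapunov stable or Lyapunov unstable. Let $\varepsilon_0>0$ and $r_2>0$, and put $F=M_2\setminus\bigcup_{p\in\mathrm{Sing}(\phi_2)}B(r_2,p)$. Then there exist $d_1>0$ and $S_0>0$ such that whenever $\xi_2$ is a $d_1$-pseudotrajectory of $\phi_2$ with $\xi_2(s_0)\in F$ for some $s_0\in\mathbb{R}$, there exist a Lyapunov unstable point $p\in\mathrm{Sing}(\phi_2)$ and a Lyapunov stable point $q\in\mathrm{Sing}(\phi_2)$ such that $\xi_2(t+s_0)\in B(r_2,p)$ for all $t\le -S_0$, $\xi_2(t+s_0)\in B(r_2,q)$ for all $t\ge S_0$, and $\mathrm{dist}_2(\xi_2(t+s_0),\phi_2(t,\xi_2(s_0)))<\min\{r_2,\varepsilon_0/4\}$ for all $t\in[-S_0,2S_0]$.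
   Context: A topological flow is a continuous $\phi:\mathbb{R}\times M\to M$ with $\phi(0,x)=x$, $\phi(s+t,x)=\phi(s,\phi(t,x))$; $\mathrm{Sing}$ is its set of fixed points. A singularity $p$ is Lyapunov stable if for every neighborhood $V$ of $p$ there is a neighborhood $U$ of $p$ with $\phi(t,x)\in V$ for all $t\ge0$, $x\in U$; Lyapunov unstable if the same holds for $t\le0$. $L(\phi)$ is the union over all $x$ of the $\omega$- and $\alpha$-limit sets of $x$. A $d$-pseudotrajectory is a map $\xi:\mathbb{R}\to M$ with $\mathrm{dist}(\xi(t+s),\phi(s,\xi(t)))<d$ for all $t\in\mathbb{R}$, $s\in[0,1]$. $B(r,p)$ is the open ball. *)

theory Defs
  imports "HOL-Analysis.Analysis"
begin

definition is_flow :: "(real \<Rightarrow> 'a::metric_space \<Rightarrow> 'a) \<Rightarrow> bool" where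
  "is_flow \<phi> \<longleftrightarrow> continuous_on UNIV (\<lambda>(t, x). \<phi> t x)
     \<and> (\<forall>x. \<phi> 0 x = x) \<and> (\<forall>s t x. \<phi> (s + t) x = \<phi> s (\<phi> t x))"

definition Sing :: "(real \<Rightarrow> 'a \<Rightarrow> 'a) \<Rightarrow> 'a set" where
  "Sing \<phi> = {x. \<forall>t. \<phi> t x = x}"

definition lyap_stable :: "(real \<Rightarrow> 'a::topological_space \<Rightarrow> 'a) \<Rightarrow> 'a \<Rightarrow> bool" where
  "lyap_stable \<phi> p \<longleftrightarrow> (\<forall>V. open V \<and> p \<in> V \<longrightarrow>
     (\<exists>U. open U \<and> p \<in> U \<and> (\<forall>x\<in>U. \<forall>t\<ge>0. \<phi> t x \<in> V)))"

definition lyap_unstable :: "(real \<Rightarrow> 'a::topological_space \<Rightarrow> 'a) \<Rightarrow> 'a \<Rightarrow> bool" where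
  "lyap_unstable \<phi> p \<longleftrightarrow> (\<forall>V. open V \<and> p \<in> V \<longrightarrow>
     (\<exists>U. open U \<and> p \<in> U \<and> (\<forall>x\<in>U. \<forall>t\<le>0. \<phi> t x \<in> V)))"

definition omega_limit :: "(real \<Rightarrow> 'a::topological_space \<Rightarrow> 'a) \<Rightarrow> 'a \<Rightarrow> 'a set" where
  "omega_limit \<phi> x = {y. \<exists>s::nat \<Rightarrow> real. filterlim s at_top sequentially
                              \<and> (\<lambda>n. \<phi> (s n) x) \<longlonglongrightarrow> y}"

definition alpha_limit :: "(real \<Rightarrow> 'a::topological_space \<Rightarrow> 'a) \<Rightarrow> 'a \<Rightarrow> 'a set" where
  "alpha_limit \<phi> x = {y. \<exists>s::nat \<Rightarrow> real. filterlim s at_bot sequentially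
                              \<and> (\<lambda>n. \<phi> (s n) x) \<longlonglongrightarrow> y}"

definition limit_set :: "(real \<Rightarrow> 'a::topological_space \<Rightarrow> 'a) \<Rightarrow> 'a set" where
  "limit_set \<phi> = (\<Union>x. omega_limit \<phi> x \<union> alpha_limit \<phi> x)"

definition pseudotraj :: "(real \<Rightarrow> 'a::metric_space \<Rightarrow> 'a) \<Rightarrow> real \<Rightarrow> (real \<Rightarrow> 'a) \<Rightarrow> bool" where
  "pseudotraj \<phi> d \<xi> \<longleftrightarrow> (\<forall>t. \<forall>s\<in>{0..1}. dist (\<xi> (t + s)) (\<phi> s (\<xi> t)) < d)"

end

theory Submission
  imports Defs
begin

text \<open>Uniform continuity of the flow on compact sets makes a fine enough pseudotrajectory shadow
  true orbits, with any prescribed accuracy, on time windows of any fixed length. An orbit starting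
  in F is regular, so its omega-limit point, a singularity, cannot be Lyapunov unstable; by
  compactness of F it enters a small ball around a stable singularity within a uniform time, and
  the pseudotrajectory follows it there. Near a stable singularity q, isolated in the finite limit
  set, orbits return close to q within bounded time, so the shadowing estimate can be restarted
  indefinitely and the pseudotrajectory stays near q forever. Reversing time yields the unstable
  singularity in the past.\<close>

lemma flow_zero: "is_flow \<phi> \<Longrightarrow> \<phi> 0 x = x"
  unfolding is_flow_def by blast

lemma flow_add: "is_flow \<phi> \<Longrightarrow> \<phi> (s + t) x = \<phi> s (\<phi> t x)"
  unfolding is_flow_def by blast

lemma flow_neg_cancel: "is_flow \<phi> \<Longrightarrow> \<phi> (- t) (\<phi> t x) = x"
  using flow_add[of \<phi> "- t" t x] flow_zero[of \<phi> x] by simp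

lemma flow_continuous_on:
  assumes "is_flow \<phi>"
  shows "continuous_on S (\<phi> t)"
proof -
  have "continuous_on UNIV (\<lambda>(t, x). \<phi> t x)"
    using assms unfolding is_flow_def by blast
  then have "continuous_on UNIV ((\<lambda>(t, x). \<phi> t x) \<circ> Pair t)"
    by (intro continuous_on_compose continuous_intros) (auto intro: continuous_on_subset)
  then show ?thesis
    by (auto simp: o_def intro: continuous_on_subset)
qed

lemma flow_uniformly_equicontinuous:
  fixes \<phi> :: "real \<Rightarrow> 'a::metric_space \<Rightarrow> 'a"
  assumes "is_flow \<phi>" "compact (UNIV :: 'a set)" "compact K" "e > 0"
  shows "\<exists>\<delta>>0. \<forall>t\<in>K. \<forall>x y. dist x y < \<delta> \<longrightarrow> dist (\<phi> t x) (\<phi> t y) < e"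
proof -
  have "continuous_on UNIV (\<lambda>(t, x). \<phi> t x)"
    using assms(1) unfolding is_flow_def by blast
  then have "uniformly_continuous_on (K \<times> UNIV) (\<lambda>(t, x). \<phi> t x)"
    by (intro compact_uniformly_continuous compact_Times assms(2,3))
      (auto intro: continuous_on_subset)
  then obtain \<delta> where "\<delta> > 0" and \<delta>: "\<forall>z\<in>K \<times> UNIV. \<forall>z'\<in>K \<times> UNIV.
      dist z' z < \<delta> \<longrightarrow> dist ((\<lambda>(t, x). \<phi> t x) z') ((\<lambda>(t, x). \<phi> t x) z) < e"
    unfolding uniformly_continuous_on_def using assms(4) by blast
  have "dist (\<phi> t x) (\<phi> t y) < e" if "t \<in> K" "dist x y < \<delta>" for t x y
    using \<delta>[rule_format, of "(t, y)" "(t, x)"] that by (simp add: dist_Pair_Pair)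
  with \<open>\<delta> > 0\<close> show ?thesis by blast
qed

lemma Sing_subset_limit_set: "Sing \<phi> \<subseteq> limit_set \<phi>"
proof
  fix p assume "p \<in> Sing \<phi>"
  then have "(\<lambda>n. \<phi> (real n) p) \<longlonglongrightarrow> p"
    by (simp add: Sing_def)
  with filterlim_real_sequentially have "p \<in> omega_limit \<phi> p"
    unfolding omega_limit_def by blast
  then show "p \<in> limit_set \<phi>"
    unfolding limit_set_def by blast
qed

lemma exists_omega_limit_sequence:
  fixes \<phi> :: "real \<Rightarrow> 'a::metric_space \<Rightarrow> 'a"
  assumes "compact (UNIV :: 'a set)"
  shows "\<exists>y\<in>limit_set \<phi>. \<exists>s. filterlim s at_top sequentially \<and> (\<forall>n. c \<le> s n)
           \<and> (\<lambda>n. \<phi> (s n) x) \<longlonglongrightarrow> y"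
proof -
  obtain y r where r: "strict_mono r" "((\<lambda>n. \<phi> (c + real n) x) \<circ> r) \<longlonglongrightarrow> y"
    using compact_imp_seq_compact[OF assms] unfolding seq_compact_def by blast
  have "filterlim (\<lambda>n. c + real n) at_top sequentially"
    by (rule filterlim_tendsto_add_at_top[OF tendsto_const filterlim_real_sequentially])
  then have s: "filterlim (\<lambda>n. c + real (r n)) at_top sequentially"
    by (rule filterlim_at_top_mono) (simp add: seq_suble[OF r(1)])
  with r(2) have "y \<in> limit_set \<phi>"
    unfolding limit_set_def omega_limit_def by (auto simp: o_def)
  with s r(2) show ?thesis
    by (intro bexI[of _ y] exI[of _ "\<lambda>n. c + real (r n)"]) (auto simp: o_def)
qed

lemma is_flow_reverse:
  assumes "is_flow \<phi>"
  shows "is_flow (\<lambda>t. \<phi> (- t))"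
proof -
  have "continuous_on UNIV (\<lambda>(t, x). \<phi> t x)"
    using assms unfolding is_flow_def by blast
  then have "continuous_on UNIV ((\<lambda>(t, x). \<phi> t x) \<circ> (\<lambda>z. (- fst z, snd z)))"
    by (intro continuous_on_compose) (auto intro!: continuous_intros intro: continuous_on_subset)
  moreover have "(\<lambda>(t, x). \<phi> t x) \<circ> (\<lambda>z. (- fst z, snd z)) = (\<lambda>(t, x). \<phi> (- t) x)"
    by auto
  moreover have "\<phi> (- (s + t)) x = \<phi> (- s) (\<phi> (- t) x)" for s t x
    using flow_add[OF assms, of "- s" "- t" x] by simp
  ultimately show ?thesis
    using flow_zero[OF assms] unfolding is_flow_def by simp
qed

lemma Sing_reverse: "Sing (\<lambda>t. \<phi> (- t)) = Sing \<phi>"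
  unfolding Sing_def by (metis minus_minus)

lemma omega_limit_reverse: "omega_limit (\<lambda>t. \<phi> (- t)) x = alpha_limit \<phi> x"
proof -
  have "(\<exists>s. filterlim s at_top sequentially \<and> (\<lambda>n. \<phi> (- s n) x) \<longlonglongrightarrow> y) \<longleftrightarrow>
        (\<exists>s. filterlim s at_bot sequentially \<and> (\<lambda>n. \<phi> (s n) x) \<longlonglongrightarrow> y)" for y
  proof safe
    fix s :: "nat \<Rightarrow> real"
    assume "filterlim s at_top sequentially" "(\<lambda>n. \<phi> (- s n) x) \<longlonglongrightarrow> y"
    then show "\<exists>s. filterlim s at_bot sequentially \<and> (\<lambda>n. \<phi> (s n) x) \<longlonglongrightarrow> y"
      by (intro exI[of _ "\<lambda>n. - s n"]) (simp add: filterlim_uminus_at_bot)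
  next
    fix s :: "nat \<Rightarrow> real"
    assume "filterlim s at_bot sequentially" "(\<lambda>n. \<phi> (s n) x) \<longlonglongrightarrow> y"
    then show "\<exists>s. filterlim s at_top sequentially \<and> (\<lambda>n. \<phi> (- s n) x) \<longlonglongrightarrow> y"
      by (intro exI[of _ "\<lambda>n. - s n"]) (simp add: filterlim_uminus_at_bot)
  qed
  then show ?thesis
    unfolding omega_limit_def alpha_limit_def by simp
qed

lemma alpha_limit_reverse: "alpha_limit (\<lambda>t. \<phi> (- t)) x = omega_limit \<phi> x"
  using omega_limit_reverse[of "\<lambda>t. \<phi> (- t)" x] by simp

lemma limit_set_reverse: "limit_set (\<lambda>t. \<phi> (- t)) = limit_set \<phi>"
  unfolding limit_set_def omega_limit_reverse alpha_limit_reverse by blast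

lemma lyap_stable_reverse: "lyap_stable (\<lambda>t. \<phi> (- t)) p \<longleftrightarrow> lyap_unstable \<phi> p"
  unfolding lyap_stable_def lyap_unstable_def by (metis neg_0_le_iff_le minus_minus)

lemma lyap_unstable_reverse: "lyap_unstable (\<lambda>t. \<phi> (- t)) p \<longleftrightarrow> lyap_stable \<phi> p"
  unfolding lyap_stable_def lyap_unstable_def by (metis neg_le_0_iff_le minus_minus)

definition shadows :: "(real \<Rightarrow> 'a::metric_space \<Rightarrow> 'a) \<Rightarrow> real \<Rightarrow> real \<Rightarrow> (real \<Rightarrow> 'a) \<Rightarrow> bool" where
  "shadows \<phi> \<eta> T \<xi> \<longleftrightarrow> (\<forall>s. \<forall>t\<in>{0..T}. dist (\<xi> (s + t)) (\<phi> t (\<xi> s)) < \<eta>)"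

lemma shadows_mono: "shadows \<phi> \<eta> T \<xi> \<Longrightarrow> \<eta> \<le> \<eta>' \<Longrightarrow> T' \<le> T \<Longrightarrow> shadows \<phi> \<eta>' T' \<xi>"
  unfolding shadows_def by (meson atLeastAtMost_iff dual_order.trans less_le_trans)

lemma shadows_two_sided:
  assumes "shadows \<phi> \<eta> T \<xi>" "shadows (\<lambda>t. \<phi> (- t)) \<eta> T (\<lambda>s. \<xi> (- s))" "t \<in> {-T..T}"
  shows "dist (\<xi> (t + s)) (\<phi> t (\<xi> s)) < \<eta>"
proof (cases "t \<ge> 0")
  case True
  then show ?thesis
    using assms(1,3) unfolding shadows_def by (auto simp: add.commute)
next
  case False
  then show ?thesis
    using assms(2,3) unfolding shadows_def
    by (auto simp: add.commute dest!: spec[of _ "- s"] bspec[of _ _ "- t"])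
qed

lemma pseudotraj_mono: "pseudotraj \<phi> d \<xi> \<Longrightarrow> d \<le> d' \<Longrightarrow> pseudotraj \<phi> d' \<xi>"
  unfolding pseudotraj_def by (meson less_le_trans)

lemma pseudotraj_shadows_integer_time:
  fixes \<phi> :: "real \<Rightarrow> 'a::metric_space \<Rightarrow> 'a"
  assumes flow: "is_flow \<phi>" and compact: "compact (UNIV :: 'a set)" and "\<eta> > 0"
  shows "\<exists>d>0. \<forall>\<xi>. pseudotraj \<phi> d \<xi> \<longrightarrow> shadows \<phi> \<eta> (real n) \<xi>"
  using \<open>\<eta> > 0\<close>
proof (induction n arbitrary: \<eta>)
  case 0
  then have "shadows \<phi> \<eta> (real 0) \<xi>" for \<xi>
    using flow_zero[OF flow] unfolding shadows_def by simp
  then show ?case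
    using zero_less_one by blast
next
  case (Suc n)
  obtain \<delta> where "\<delta> > 0"
    and \<delta>: "\<forall>t\<in>{0..1}. \<forall>x y. dist x y < \<delta> \<longrightarrow> dist (\<phi> t x) (\<phi> t y) < \<eta> / 2"
    using flow_uniformly_equicontinuous[OF flow compact compact_Icc, of "\<eta> / 2" 0 1] Suc.prems by auto
  obtain d where "d > 0" and d: "\<forall>\<xi>. pseudotraj \<phi> d \<xi> \<longrightarrow> shadows \<phi> (min \<delta> \<eta>) (real n) \<xi>"
    using Suc.IH[of "min \<delta> \<eta>"] \<open>\<delta> > 0\<close> Suc.prems by auto
  have "shadows \<phi> \<eta> (real (Suc n)) \<xi>" if ps: "pseudotraj \<phi> (min d (\<eta> / 2)) \<xi>" for \<xi>
    unfolding shadows_def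
  proof (intro allI ballI)
    fix s t assume t: "t \<in> {0..real (Suc n)}"
    have sh: "shadows \<phi> (min \<delta> \<eta>) (real n) \<xi>"
      using d pseudotraj_mono[OF ps] by simp
    show "dist (\<xi> (s + t)) (\<phi> t (\<xi> s)) < \<eta>"
    proof (cases "t \<le> real n")
      case True
      then show ?thesis
        using sh t unfolding shadows_def by fastforce
    next
      case False
      define r where "r = t - real n"
      have r: "r \<in> {0..1}"
        using False t unfolding r_def by auto
      have "dist (\<xi> (s + real n)) (\<phi> (real n) (\<xi> s)) < \<delta>"
        using sh unfolding shadows_def by fastforce
      with \<delta> r have "dist (\<phi> r (\<xi> (s + real n))) (\<phi> t (\<xi> s)) < \<eta> / 2"
        using flow_add[OF flow, of r "real n"] unfolding r_def by force
      moreover have "dist (\<xi> (s + real n + r)) (\<phi> r (\<xi> (s + real n))) < \<eta> / 2"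
        using ps r unfolding pseudotraj_def by fastforce
      moreover have "s + real n + r = s + t"
        unfolding r_def by simp
      ultimately show ?thesis
        using dist_triangle[of "\<xi> (s + t)" "\<phi> t (\<xi> s)" "\<phi> r (\<xi> (s + real n))"] by simp
    qed
  qed
  moreover have "min d (\<eta> / 2) > 0"
    using \<open>d > 0\<close> Suc.prems by simp
  ultimately show ?case
    by blast
qed

text \<open>Backward shadowing follows from forward shadowing, shifted in time, because the flow is
  uniformly equicontinuous on the compact time interval [-T, 0].\<close>
lemma pseudotraj_shadows:
  fixes \<phi> :: "real \<Rightarrow> 'a::metric_space \<Rightarrow> 'a"
  assumes flow: "is_flow \<phi>" and compact: "compact (UNIV :: 'a set)" and "\<eta> > 0"
  shows "\<exists>d>0. \<forall>\<xi>. pseudotraj \<phi> d \<xi> \<longrightarrow>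
           shadows \<phi> \<eta> T \<xi> \<and> shadows (\<lambda>t. \<phi> (- t)) \<eta> T (\<lambda>s. \<xi> (- s))"
proof -
  obtain \<delta> where "\<delta> > 0" and \<delta>: "\<forall>t\<in>{-T..0}. \<forall>x y. dist x y < \<delta> \<longrightarrow> dist (\<phi> t x) (\<phi> t y) < \<eta>"
    using flow_uniformly_equicontinuous[OF flow compact compact_Icc \<open>\<eta> > 0\<close>] by blast
  obtain d where "d > 0" and d: "\<forall>\<xi>. pseudotraj \<phi> d \<xi> \<longrightarrow> shadows \<phi> (min \<delta> \<eta>) (real (nat \<lceil>T\<rceil>)) \<xi>"
    using pseudotraj_shadows_integer_time[OF flow compact, of "min \<delta> \<eta>"] \<open>\<delta> > 0\<close> \<open>\<eta> > 0\<close> by auto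
  have "shadows \<phi> \<eta> T \<xi> \<and> shadows (\<lambda>t. \<phi> (- t)) \<eta> T (\<lambda>s. \<xi> (- s))" if "pseudotraj \<phi> d \<xi>" for \<xi>
  proof
    have sh: "shadows \<phi> (min \<delta> \<eta>) T \<xi>"
      using d that by (auto elim!: shadows_mono simp: real_nat_ceiling_ge)
    then show "shadows \<phi> \<eta> T \<xi>"
      by (rule shadows_mono) auto
    show "shadows (\<lambda>t. \<phi> (- t)) \<eta> T (\<lambda>s. \<xi> (- s))"
      unfolding shadows_def
    proof (intro allI ballI)
      fix s t assume t: "t \<in> {0..T}"
      then have "dist (\<xi> (- s)) (\<phi> t (\<xi> (- s - t))) < \<delta>"
        using sh unfolding shadows_def by (force dest: spec[of _ "- s - t"])
      then have "dist (\<phi> (- t) (\<xi> (- s))) (\<phi> (- t) (\<phi> t (\<xi> (- s - t)))) < \<eta>"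
        using \<delta> t by auto
      then show "dist (\<xi> (- (s + t))) (\<phi> (- t) (\<xi> (- s))) < \<eta>"
        by (simp add: flow_neg_cancel[OF flow] dist_commute)
    qed
  qed
  with \<open>d > 0\<close> show ?thesis by blast
qed

lemma compact_uniform_hitting_time:
  assumes flow: "is_flow \<phi>" and "compact K" "open W" and hit: "\<forall>x\<in>K. \<exists>t\<ge>a. \<phi> t x \<in> W"
  shows "\<exists>T\<ge>a. \<forall>x\<in>K. \<exists>t\<in>{a..T}. \<phi> t x \<in> W"
proof -
  obtain J where J: "J \<subseteq> {a..}" "finite J" "K \<subseteq> (\<Union>t\<in>J. \<phi> t -` W)"
  proof (rule compactE_image[OF \<open>compact K\<close>, of "{a..}" "\<lambda>t. \<phi> t -` W"])
    show "open (\<phi> t -` W)" for t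
      using open_vimage[OF \<open>open W\<close> flow_continuous_on[OF flow]] .
    show "K \<subseteq> (\<Union>t\<in>{a..}. \<phi> t -` W)"
      using hit by fastforce
  qed blast
  have "\<forall>x\<in>K. \<exists>t\<in>{a..Max (insert a J)}. \<phi> t x \<in> W"
    using J by fastforce
  then show ?thesis
    using J(2) by (intro exI[of _ "Max (insert a J)"]) auto
qed

lemma returns_near_isolated_limit_point:
  fixes \<phi> :: "real \<Rightarrow> 'a::metric_space \<Rightarrow> 'a"
  assumes "compact (UNIV :: 'a set)"
    and trapped: "\<forall>t\<ge>0. \<phi> t x \<in> ball q \<epsilon>"
    and isolated: "limit_set \<phi> \<inter> cball q \<epsilon> \<subseteq> {q}" and "r > 0"
  shows "\<exists>t\<ge>1. \<phi> t x \<in> ball q r"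
proof -
  obtain y s where "y \<in> limit_set \<phi>" "\<forall>n. 1 \<le> s n" and lim: "(\<lambda>n. \<phi> (s n) x) \<longlonglongrightarrow> y"
    using exists_omega_limit_sequence[OF assms(1), of \<phi> 1 x] by blast
  moreover have "dist q y \<le> \<epsilon>"
  proof (rule LIMSEQ_le_const2)
    show "(\<lambda>n. dist q (\<phi> (s n) x)) \<longlonglongrightarrow> dist q y"
      by (intro tendsto_intros lim)
    show "\<exists>N. \<forall>n\<ge>N. dist q (\<phi> (s n) x) \<le> \<epsilon>"
      using trapped \<open>\<forall>n. 1 \<le> s n\<close> by (meson dual_order.trans less_imp_le mem_ball zero_le_one)
  qed
  ultimately have "y = q"
    using isolated by auto
  with lim \<open>r > 0\<close> have "\<forall>\<^sub>F n in sequentially. \<phi> (s n) x \<in> ball q r"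
    by (intro topological_tendstoD) auto
  then obtain n where "\<phi> (s n) x \<in> ball q r"
    using eventually_happens'[OF sequentially_bot] by blast
  with \<open>\<forall>n. 1 \<le> s n\<close> show ?thesis by blast
qed

lemma shadows_in_ball:
  assumes "shadows \<phi> \<eta> T \<xi>" "t \<in> {0..T}" "\<phi> t (\<xi> s) \<in> ball q \<epsilon>'" "\<eta> \<le> \<epsilon> - \<epsilon>'"
  shows "\<xi> (s + t) \<in> ball q \<epsilon>"
proof -
  have "dist (\<xi> (s + t)) (\<phi> t (\<xi> s)) < \<epsilon> - \<epsilon>'"
    using assms(1,2,4) unfolding shadows_def by (meson less_le_trans)
  with assms(3) show ?thesis
    using dist_triangle[of q "\<xi> (s + t)" "\<phi> t (\<xi> s)"] by (simp add: dist_commute)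
qed

text \<open>The induction restarts the shadowing estimate each time the pseudotrajectory is back in
  the small ball; the return time is at least 1, so finitely many restarts cover any [0, t].\<close>
lemma shadows_stays_in_ball:
  assumes return: "\<forall>x\<in>cball q \<rho>. \<exists>t\<in>{1..T}. \<phi> t x \<in> ball q (\<rho> / 2)"
    and stay: "\<forall>x\<in>cball q \<rho>. \<forall>t\<in>{0..T}. \<phi> t x \<in> ball q \<epsilon>'"
    and sh: "shadows \<phi> \<eta> T \<xi>" and "\<eta> \<le> \<rho> / 2" "\<eta> \<le> \<epsilon> - \<epsilon>'"
    and start: "\<xi> s \<in> cball q \<rho>" and "0 \<le> t"
  shows "\<xi> (s + t) \<in> ball q \<epsilon>"
proof -
  have "T \<ge> 1"
    using return start by fastforce
  have short: "\<xi> (s + t) \<in> ball q \<epsilon>" if "\<xi> s \<in> cball q \<rho>" "t \<in> {0..T}" for s t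
    using shadows_in_ball[OF sh] stay that \<open>\<eta> \<le> \<epsilon> - \<epsilon>'\<close> by blast
  have "\<forall>s. \<xi> s \<in> cball q \<rho> \<longrightarrow> (\<forall>t\<in>{0..real n}. \<xi> (s + t) \<in> ball q \<epsilon>)" for n
  proof (induction n)
    case 0
    then show ?case
      using short[of _ 0] \<open>T \<ge> 1\<close> by auto
  next
    case (Suc n)
    show ?case
    proof (intro allI impI ballI)
      fix s t assume start: "\<xi> s \<in> cball q \<rho>" and t: "t \<in> {0..real (Suc n)}"
      obtain t1 where t1: "t1 \<in> {1..T}" "\<phi> t1 (\<xi> s) \<in> ball q (\<rho> / 2)"
        using return start by blast
      then have "\<xi> (s + t1) \<in> ball q \<rho>"
        using shadows_in_ball[OF sh, of t1 s q "\<rho> / 2" \<rho>] \<open>\<eta> \<le> \<rho> / 2\<close> by simp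
      then have restart: "\<xi> (s + t1) \<in> cball q \<rho>"
        by simp
      show "\<xi> (s + t) \<in> ball q \<epsilon>"
      proof (cases "t \<le> T")
        case True
        then show ?thesis
          using short start t by simp
      next
        case False
        then have "t - t1 \<in> {0..real n}"
          using t t1(1) by auto
        then have "\<xi> (s + t1 + (t - t1)) \<in> ball q \<epsilon>"
          using Suc.IH restart by blast
        then show ?thesis by simp
      qed
    qed
  qed
  moreover have "t \<in> {0..real (nat \<lceil>t\<rceil>)}"
    using \<open>0 \<le> t\<close> by (simp add: real_nat_ceiling_ge)
  ultimately show ?thesis
    using start by blast
qed

lemma eventually_at_right_at_top_exists:
  assumes "\<forall>\<^sub>F x in at_right (0 :: real) \<times>\<^sub>F (at_top :: real filter). P x"
  shows "\<exists>\<delta>>0. \<exists>T. P (\<delta>, T)"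
proof -
  have "\<forall>\<^sub>F (\<delta>, T) in at_right (0 :: real) \<times>\<^sub>F (at_top :: real filter). 0 < \<delta>"
    using eventually_at_right_less[of "0 :: real"] by (simp add: eventually_prod1)
  from eventually_conj[OF this assms] have "\<exists>x. (case x of (\<delta>, T) \<Rightarrow> 0 < \<delta>) \<and> P x"
    by (rule eventually_happens'[rotated]) (simp add: prod_filter_eq_bot)
  then show ?thesis by auto
qed

text \<open>Near a Lyapunov stable point q that is isolated in the limit set, every orbit stays in a
  small ball and, having an omega-limit point there, returns close to q; by compactness the
  return time is bounded. The eventually form over (\<delta>, T) makes the statement uniform over
  finitely many stable points.\<close>
lemma shadows_trapped_near_stable:
  fixes \<phi> :: "real \<Rightarrow> 'a::metric_space \<Rightarrow> 'a"
  assumes flow: "is_flow \<phi>" and compact: "compact (UNIV :: 'a set)"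
    and "finite (limit_set \<phi>)" and stable: "lyap_stable \<phi> q" and "\<epsilon> > 0"
  shows "\<forall>\<^sub>F (\<delta>, T) in at_right 0 \<times>\<^sub>F at_top. \<forall>\<xi> s t.
           shadows \<phi> \<delta> T \<xi> \<and> \<xi> s \<in> cball q \<delta> \<and> 0 \<le> t \<longrightarrow> \<xi> (s + t) \<in> ball q \<epsilon>"
proof -
  obtain e where "e > 0" and e: "\<forall>y\<in>limit_set \<phi>. y \<noteq> q \<longrightarrow> e \<le> dist q y"
    using finite_set_avoid[OF assms(3)] by blast
  define \<epsilon>' where "\<epsilon>' = min \<epsilon> e / 2"
  have "0 < \<epsilon>'" "\<epsilon>' < \<epsilon>"
    using \<open>e > 0\<close> \<open>\<epsilon> > 0\<close> unfolding \<epsilon>'_def by auto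
  have isolated: "limit_set \<phi> \<inter> cball q \<epsilon>' \<subseteq> {q}"
    using e \<open>e > 0\<close> unfolding \<epsilon>'_def by force
  obtain U where "open U" "q \<in> U" and U: "\<forall>x\<in>U. \<forall>t\<ge>0. \<phi> t x \<in> ball q \<epsilon>'"
    using stable \<open>0 < \<epsilon>'\<close> unfolding lyap_stable_def by (meson centre_in_ball open_ball)
  obtain \<rho> where "\<rho> > 0" "cball q \<rho> \<subseteq> U"
    using \<open>open U\<close> \<open>q \<in> U\<close> open_contains_cball by blast
  with U have stay: "\<forall>x\<in>cball q \<rho>. \<forall>t\<in>{0..T}. \<phi> t x \<in> ball q \<epsilon>'" for T
    by auto
  have "compact (cball q \<rho>)"
    using closed_Int_compact[OF closed_cball compact] by simp
  moreover have "\<forall>x\<in>cball q \<rho>. \<exists>t\<ge>1. \<phi> t x \<in> ball q (\<rho> / 2)"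
    using returns_near_isolated_limit_point[OF compact _ isolated] U \<open>cball q \<rho> \<subseteq> U\<close> \<open>\<rho> > 0\<close>
    by (meson half_gt_zero subsetD)
  ultimately obtain T where return: "\<forall>x\<in>cball q \<rho>. \<exists>t\<in>{1..T}. \<phi> t x \<in> ball q (\<rho> / 2)"
    using compact_uniform_hitting_time[OF flow _ open_ball] by blast
  define \<eta> where "\<eta> = min (\<rho> / 2) (\<epsilon> - \<epsilon>')"
  have "\<xi> (s + t) \<in> ball q \<epsilon>"
    if "\<delta> \<le> \<eta>" "T \<le> T'" "shadows \<phi> \<delta> T' \<xi>" "\<xi> s \<in> cball q \<delta>" "0 \<le> t" for \<delta> T' \<xi> s t
  proof (rule shadows_stays_in_ball[OF return stay])
    show "shadows \<phi> \<eta> T \<xi>"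
      using that by (blast intro: shadows_mono)
    show "\<xi> s \<in> cball q \<rho>"
      using that \<open>\<rho> > 0\<close> unfolding \<eta>_def by auto
  qed (use that in \<open>auto simp: \<eta>_def min_def\<close>)
  moreover have "\<forall>\<^sub>F \<delta> in at_right 0. \<delta> \<le> \<eta>"
    using \<open>\<rho> > 0\<close> \<open>\<epsilon>' < \<epsilon>\<close> unfolding eventually_at_right_field \<eta>_def
    by (intro exI[of _ \<eta>]) (auto simp: \<eta>_def)
  moreover have "\<forall>\<^sub>F T' in at_top. T \<le> T'"
    by (rule eventually_ge_at_top)
  ultimately show ?thesis
    unfolding eventually_prod_filter by blast
qed

text \<open>An omega-limit point y of a regular point x cannot be Lyapunov unstable: backward orbits
  of points near y would stay in the neighbourhood - {x} of y, yet x lies on such an orbit.\<close>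
lemma orbit_approaches_stable_singularity:
  fixes \<phi> :: "real \<Rightarrow> 'a::metric_space \<Rightarrow> 'a"
  assumes flow: "is_flow \<phi>" and compact: "compact (UNIV :: 'a set)"
    and sub: "limit_set \<phi> \<subseteq> Sing \<phi>"
    and dichotomy: "\<forall>p\<in>limit_set \<phi>. lyap_stable \<phi> p \<or> lyap_unstable \<phi> p"
    and "x \<notin> Sing \<phi>" "\<rho> > 0"
  shows "\<exists>t\<ge>0. \<exists>q\<in>Sing \<phi>. lyap_stable \<phi> q \<and> \<phi> t x \<in> ball q \<rho>"
proof -
  obtain y s where y: "y \<in> limit_set \<phi>" and "\<forall>n. 0 \<le> s n" and lim: "(\<lambda>n. \<phi> (s n) x) \<longlonglongrightarrow> y"
    using exists_omega_limit_sequence[OF compact, of \<phi> 0 x] by blast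
  have "lyap_stable \<phi> y"
  proof (rule ccontr)
    assume "\<not> lyap_stable \<phi> y"
    with dichotomy y have "lyap_unstable \<phi> y" by blast
    moreover have "y \<in> - {x}"
      using y sub \<open>x \<notin> Sing \<phi>\<close> by auto
    moreover have "open (- {x})"
      by (simp add: open_Compl)
    ultimately obtain U where "open U" "y \<in> U" and U: "\<forall>z\<in>U. \<forall>t\<le>0. \<phi> t z \<in> - {x}"
      unfolding lyap_unstable_def by blast
    obtain n where "\<phi> (s n) x \<in> U"
      using eventually_happens'[OF sequentially_bot topological_tendstoD[OF lim \<open>open U\<close> \<open>y \<in> U\<close>]]
      by blast
    then have "\<phi> (- s n) (\<phi> (s n) x) \<in> - {x}"
      using U \<open>\<forall>n. 0 \<le> s n\<close> by simp
    then show False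
      using flow_neg_cancel[OF flow] by simp
  qed
  moreover obtain n where "\<phi> (s n) x \<in> ball y \<rho>"
    using eventually_happens'[OF sequentially_bot topological_tendstoD[OF lim open_ball]] \<open>\<rho> > 0\<close>
    by (meson centre_in_ball)
  ultimately show ?thesis
    using y sub \<open>\<forall>n. 0 \<le> s n\<close> by (intro exI[of _ "s n"] conjI bexI[of _ y]) auto
qed

lemma uniform_time_to_stable_singularity:
  fixes \<phi> :: "real \<Rightarrow> 'a::metric_space \<Rightarrow> 'a"
  assumes flow: "is_flow \<phi>" and compact: "compact (UNIV :: 'a set)"
    and "limit_set \<phi> \<subseteq> Sing \<phi>"
    and "\<forall>p\<in>limit_set \<phi>. lyap_stable \<phi> p \<or> lyap_unstable \<phi> p"
    and "\<rho> > 0" "r > 0"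
  shows "\<exists>T. \<forall>x. x \<notin> (\<Union>p\<in>Sing \<phi>. ball p r) \<longrightarrow>
           (\<exists>t\<in>{0..T}. \<exists>q\<in>Sing \<phi>. lyap_stable \<phi> q \<and> \<phi> t x \<in> ball q \<rho>)"
proof -
  let ?F = "- (\<Union>p\<in>Sing \<phi>. ball p r)"
  let ?W = "\<Union>q\<in>{q\<in>Sing \<phi>. lyap_stable \<phi> q}. ball q \<rho>"
  have "closed ?F"
    by (intro closed_Compl open_UN ballI open_ball)
  then have "compact ?F"
    using closed_Int_compact[OF _ compact] by simp
  moreover have "open ?W"
    by (intro open_UN ballI open_ball)
  moreover have "\<forall>x\<in>?F. \<exists>t\<ge>0. \<phi> t x \<in> ?W"
  proof
    fix x assume "x \<in> ?F"
    then have "x \<notin> Sing \<phi>"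
      using \<open>r > 0\<close> by (meson ComplD UN_I centre_in_ball)
    from orbit_approaches_stable_singularity[OF assms(1-4) this \<open>\<rho> > 0\<close>]
    show "\<exists>t\<ge>0. \<phi> t x \<in> ?W"
      by blast
  qed
  ultimately have "\<exists>T\<ge>0. \<forall>x\<in>?F. \<exists>t\<in>{0..T}. \<phi> t x \<in> ?W"
    by (rule compact_uniform_hitting_time[OF flow])
  then obtain T where T: "\<forall>x\<in>?F. \<exists>t\<in>{0..T}. \<phi> t x \<in> ?W"
    by blast
  show ?thesis
  proof (intro exI[of _ T] allI impI)
    fix x assume "x \<notin> (\<Union>p\<in>Sing \<phi>. ball p r)"
    then obtain t where "t \<in> {0..T}" "\<phi> t x \<in> ?W"
      using T by blast
    then show "\<exists>t\<in>{0..T}. \<exists>q\<in>Sing \<phi>. lyap_stable \<phi> q \<and> \<phi> t x \<in> ball q \<rho>"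
      by blast
  qed
qed

lemma shadows_trapped_near_stable_points:
  fixes \<phi> :: "real \<Rightarrow> 'a::metric_space \<Rightarrow> 'a"
  assumes flow: "is_flow \<phi>" and compact: "compact (UNIV :: 'a set)"
    and fin: "finite (limit_set \<phi>)" and "\<epsilon> > 0"
  shows "\<exists>\<delta>>0. \<exists>T. \<forall>q\<in>Sing \<phi>. lyap_stable \<phi> q \<longrightarrow> (\<forall>\<xi> s t.
           shadows \<phi> \<delta> T \<xi> \<and> \<xi> s \<in> cball q \<delta> \<and> 0 \<le> t \<longrightarrow> \<xi> (s + t) \<in> ball q \<epsilon>)"
proof -
  let ?Q = "{q\<in>Sing \<phi>. lyap_stable \<phi> q}"
  have "finite ?Q"
    using finite_subset[OF Sing_subset_limit_set fin] by simp
  moreover have "\<forall>q\<in>?Q. \<forall>\<^sub>F (\<delta>, T) in at_right 0 \<times>\<^sub>F at_top. \<forall>\<xi> s t.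
      shadows \<phi> \<delta> T \<xi> \<and> \<xi> s \<in> cball q \<delta> \<and> 0 \<le> t \<longrightarrow> \<xi> (s + t) \<in> ball q \<epsilon>"
    using shadows_trapped_near_stable[OF flow compact fin _ \<open>\<epsilon> > 0\<close>] by blast
  ultimately have "\<forall>\<^sub>F (\<delta>, T) in at_right 0 \<times>\<^sub>F at_top. \<forall>q\<in>?Q. \<forall>\<xi> s t.
      shadows \<phi> \<delta> T \<xi> \<and> \<xi> s \<in> cball q \<delta> \<and> 0 \<le> t \<longrightarrow> \<xi> (s + t) \<in> ball q \<epsilon>"
    by (rule eventually_ball_finite[THEN eventually_mono]) (auto simp: case_prod_unfold)
  from eventually_at_right_at_top_exists[OF this] show ?thesis
    by blast
qed

lemma shadows_converges_to_stable:
  fixes \<phi> :: "real \<Rightarrow> 'a::metric_space \<Rightarrow> 'a"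
  assumes flow: "is_flow \<phi>" and compact: "compact (UNIV :: 'a set)"
    and fin: "finite (limit_set \<phi>)" and sub: "limit_set \<phi> \<subseteq> Sing \<phi>"
    and dichotomy: "\<forall>p\<in>limit_set \<phi>. lyap_stable \<phi> p \<or> lyap_unstable \<phi> p" and "r > 0"
  shows "\<exists>\<eta>>0. \<exists>T. \<forall>\<xi> s0. shadows \<phi> \<eta> T \<xi> \<and> \<xi> s0 \<notin> (\<Union>p\<in>Sing \<phi>. ball p r) \<longrightarrow>
           (\<exists>q\<in>Sing \<phi>. lyap_stable \<phi> q \<and> (\<forall>t\<ge>T. \<xi> (t + s0) \<in> ball q r))"
proof -
  obtain \<delta> T where "0 < \<delta>" and trap: "\<forall>q\<in>Sing \<phi>. lyap_stable \<phi> q \<longrightarrow> (\<forall>\<xi> s t.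
      shadows \<phi> \<delta> T \<xi> \<and> \<xi> s \<in> cball q \<delta> \<and> 0 \<le> t \<longrightarrow> \<xi> (s + t) \<in> ball q r)"
    using shadows_trapped_near_stable_points[OF flow compact fin \<open>r > 0\<close>] by blast
  obtain T' where reach: "\<forall>x. x \<notin> (\<Union>p\<in>Sing \<phi>. ball p r) \<longrightarrow>
      (\<exists>t\<in>{0..T'}. \<exists>q\<in>Sing \<phi>. lyap_stable \<phi> q \<and> \<phi> t x \<in> ball q (\<delta> / 2))"
    using uniform_time_to_stable_singularity[OF flow compact sub dichotomy _ \<open>r > 0\<close>] \<open>0 < \<delta>\<close>
    by (meson half_gt_zero)
  have "\<exists>q\<in>Sing \<phi>. lyap_stable \<phi> q \<and> (\<forall>t\<ge>max T T'. \<xi> (t + s0) \<in> ball q r)"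
    if sh: "shadows \<phi> (\<delta> / 2) (max T T') \<xi>" and start: "\<xi> s0 \<notin> (\<Union>p\<in>Sing \<phi>. ball p r)" for \<xi> s0
  proof -
    obtain t1 q where t1: "t1 \<in> {0..T'}" and q: "q \<in> Sing \<phi>" "lyap_stable \<phi> q"
      and near: "\<phi> t1 (\<xi> s0) \<in> ball q (\<delta> / 2)"
      using reach start by blast
    then have "\<xi> (s0 + t1) \<in> ball q \<delta>"
      using shadows_in_ball[OF sh, of t1 s0 q "\<delta> / 2" \<delta>] by auto
    then have restart: "\<xi> (s0 + t1) \<in> cball q \<delta>"
      by simp
    have "shadows \<phi> \<delta> T \<xi>"
      using sh by (rule shadows_mono) (use \<open>0 < \<delta>\<close> in auto)
    have "\<xi> (t + s0) \<in> ball q r" if "t \<ge> max T T'" for t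
    proof -
      have "0 \<le> t - t1" "t + s0 = s0 + t1 + (t - t1)"
        using t1 that by auto
      then show ?thesis
        using trap q \<open>shadows \<phi> \<delta> T \<xi>\<close> restart by metis
    qed
    with q show ?thesis
      by blast
  qed
  then have "\<forall>\<xi> s0. shadows \<phi> (\<delta> / 2) (max T T') \<xi> \<and> \<xi> s0 \<notin> (\<Union>p\<in>Sing \<phi>. ball p r) \<longrightarrow>
      (\<exists>q\<in>Sing \<phi>. lyap_stable \<phi> q \<and> (\<forall>t\<ge>max T T'. \<xi> (t + s0) \<in> ball q r))"
    by blast
  moreover have "0 < \<delta> / 2"
    using \<open>0 < \<delta>\<close> by simp
  ultimately show ?thesis
    by (intro exI[of _ "\<delta> / 2"] conjI[rotated] exI[of _ "max T T'"])
qed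

lemma shadows_backward_converges_to_unstable:
  fixes \<phi> :: "real \<Rightarrow> 'a::metric_space \<Rightarrow> 'a"
  assumes flow: "is_flow \<phi>" and compact: "compact (UNIV :: 'a set)"
    and fin: "finite (limit_set \<phi>)" and sub: "limit_set \<phi> \<subseteq> Sing \<phi>"
    and dichotomy: "\<forall>p\<in>limit_set \<phi>. lyap_stable \<phi> p \<or> lyap_unstable \<phi> p" and "r > 0"
  shows "\<exists>\<eta>>0. \<exists>T. \<forall>\<xi> s0. shadows (\<lambda>t. \<phi> (- t)) \<eta> T (\<lambda>s. \<xi> (- s))
           \<and> \<xi> s0 \<notin> (\<Union>p\<in>Sing \<phi>. ball p r) \<longrightarrow>
           (\<exists>p\<in>Sing \<phi>. lyap_unstable \<phi> p \<and> (\<forall>t\<le>-T. \<xi> (t + s0) \<in> ball p r))"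
proof -
  have "finite (limit_set (\<lambda>t. \<phi> (- t)))" "limit_set (\<lambda>t. \<phi> (- t)) \<subseteq> Sing (\<lambda>t. \<phi> (- t))"
    using fin sub by (simp_all add: limit_set_reverse Sing_reverse)
  moreover have "\<forall>p\<in>limit_set (\<lambda>t. \<phi> (- t)).
      lyap_stable (\<lambda>t. \<phi> (- t)) p \<or> lyap_unstable (\<lambda>t. \<phi> (- t)) p"
    using dichotomy by (auto simp: limit_set_reverse lyap_stable_reverse lyap_unstable_reverse)
  ultimately obtain \<eta> T where "\<eta> > 0" and reversed: "\<forall>\<xi> s0. shadows (\<lambda>t. \<phi> (- t)) \<eta> T \<xi>
      \<and> \<xi> s0 \<notin> (\<Union>p\<in>Sing \<phi>. ball p r) \<longrightarrow>
      (\<exists>p\<in>Sing \<phi>. lyap_unstable \<phi> p \<and> (\<forall>t\<ge>T. \<xi> (t + s0) \<in> ball p r))"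
    using shadows_converges_to_stable[OF is_flow_reverse[OF flow] compact _ _ _ \<open>r > 0\<close>]
    unfolding Sing_reverse lyap_stable_reverse by blast
  have "\<exists>p\<in>Sing \<phi>. lyap_unstable \<phi> p \<and> (\<forall>t\<le>-T. \<xi> (t + s0) \<in> ball p r)"
    if sh: "shadows (\<lambda>t. \<phi> (- t)) \<eta> T (\<lambda>s. \<xi> (- s))"
      and start: "\<xi> s0 \<notin> (\<Union>p\<in>Sing \<phi>. ball p r)" for \<xi> s0
  proof -
    obtain p where "p \<in> Sing \<phi>" "lyap_unstable \<phi> p" and p: "\<forall>t\<ge>T. \<xi> (s0 - t) \<in> ball p r"
      using reversed[rule_format, of "\<lambda>s. \<xi> (- s)" "- s0"] sh start by auto
    have "\<xi> (t + s0) \<in> ball p r" if "t \<le> - T" for t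
      using p[rule_format, of "- t"] that by (simp add: add.commute)
    with \<open>p \<in> Sing \<phi>\<close> \<open>lyap_unstable \<phi> p\<close> show ?thesis by blast
  qed
  with \<open>\<eta> > 0\<close> show ?thesis by blast
qed

lemma shadows_connects_unstable_to_stable:
  fixes \<phi> :: "real \<Rightarrow> 'a::metric_space \<Rightarrow> 'a"
  assumes "is_flow \<phi>" "compact (UNIV :: 'a set)" "finite (limit_set \<phi>)" "limit_set \<phi> \<subseteq> Sing \<phi>"
    and "\<forall>p\<in>limit_set \<phi>. lyap_stable \<phi> p \<or> lyap_unstable \<phi> p" and "r > 0"
  shows "\<exists>\<eta>>0. \<exists>S>0. \<forall>\<xi> s0.
           shadows \<phi> \<eta> S \<xi> \<and> shadows (\<lambda>t. \<phi> (- t)) \<eta> S (\<lambda>s. \<xi> (- s))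
           \<and> \<xi> s0 \<notin> (\<Union>p\<in>Sing \<phi>. ball p r) \<longrightarrow>
           (\<exists>p q. p \<in> Sing \<phi> \<and> lyap_unstable \<phi> p \<and> q \<in> Sing \<phi> \<and> lyap_stable \<phi> q
              \<and> (\<forall>t\<le>-S. \<xi> (t + s0) \<in> ball p r) \<and> (\<forall>t\<ge>S. \<xi> (t + s0) \<in> ball q r))"
proof -
  obtain \<eta>f Tf where "\<eta>f > 0" and forward: "\<forall>\<xi> s0. shadows \<phi> \<eta>f Tf \<xi>
      \<and> \<xi> s0 \<notin> (\<Union>p\<in>Sing \<phi>. ball p r) \<longrightarrow>
      (\<exists>q\<in>Sing \<phi>. lyap_stable \<phi> q \<and> (\<forall>t\<ge>Tf. \<xi> (t + s0) \<in> ball q r))"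
    using shadows_converges_to_stable[OF assms] by blast
  obtain \<eta>b Tb where "\<eta>b > 0" and backward: "\<forall>\<xi> s0. shadows (\<lambda>t. \<phi> (- t)) \<eta>b Tb (\<lambda>s. \<xi> (- s))
      \<and> \<xi> s0 \<notin> (\<Union>p\<in>Sing \<phi>. ball p r) \<longrightarrow>
      (\<exists>p\<in>Sing \<phi>. lyap_unstable \<phi> p \<and> (\<forall>t\<le>-Tb. \<xi> (t + s0) \<in> ball p r))"
    using shadows_backward_converges_to_unstable[OF assms] by blast
  define S where "S = max 1 (max Tf Tb)"
  have "S > 0" "Tf \<le> S" "Tb \<le> S"
    unfolding S_def by auto
  have "\<exists>p q. p \<in> Sing \<phi> \<and> lyap_unstable \<phi> p \<and> q \<in> Sing \<phi> \<and> lyap_stable \<phi> q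
          \<and> (\<forall>t\<le>-S. \<xi> (t + s0) \<in> ball p r) \<and> (\<forall>t\<ge>S. \<xi> (t + s0) \<in> ball q r)"
    if fw: "shadows \<phi> (min \<eta>f \<eta>b) S \<xi>" and bw: "shadows (\<lambda>t. \<phi> (- t)) (min \<eta>f \<eta>b) S (\<lambda>s. \<xi> (- s))"
      and start: "\<xi> s0 \<notin> (\<Union>p\<in>Sing \<phi>. ball p r)" for \<xi> s0
  proof -
    have "shadows \<phi> \<eta>f Tf \<xi>"
      using fw by (rule shadows_mono) (use \<open>Tf \<le> S\<close> in auto)
    then obtain q where "q \<in> Sing \<phi>" "lyap_stable \<phi> q" and q: "\<forall>t\<ge>Tf. \<xi> (t + s0) \<in> ball q r"
      using forward start by blast
    have "shadows (\<lambda>t. \<phi> (- t)) \<eta>b Tb (\<lambda>s. \<xi> (- s))"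
      using bw by (rule shadows_mono) (use \<open>Tb \<le> S\<close> in auto)
    then obtain p where "p \<in> Sing \<phi>" "lyap_unstable \<phi> p" and p: "\<forall>t\<le>-Tb. \<xi> (t + s0) \<in> ball p r"
      using backward start by blast
    have "\<forall>t\<le>-S. \<xi> (t + s0) \<in> ball p r" "\<forall>t\<ge>S. \<xi> (t + s0) \<in> ball q r"
      using p q \<open>Tf \<le> S\<close> \<open>Tb \<le> S\<close> by auto
    with \<open>p \<in> Sing \<phi>\<close> \<open>lyap_unstable \<phi> p\<close> \<open>q \<in> Sing \<phi>\<close> \<open>lyap_stable \<phi> q\<close> show ?thesis
      by blast
  qed
  then have "\<forall>\<xi> s0. shadows \<phi> (min \<eta>f \<eta>b) S \<xi> \<and> shadows (\<lambda>t. \<phi> (- t)) (min \<eta>f \<eta>b) S (\<lambda>s. \<xi> (- s))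
      \<and> \<xi> s0 \<notin> (\<Union>p\<in>Sing \<phi>. ball p r) \<longrightarrow>
      (\<exists>p q. p \<in> Sing \<phi> \<and> lyap_unstable \<phi> p \<and> q \<in> Sing \<phi> \<and> lyap_stable \<phi> q
         \<and> (\<forall>t\<le>-S. \<xi> (t + s0) \<in> ball p r) \<and> (\<forall>t\<ge>S. \<xi> (t + s0) \<in> ball q r))"
    by blast
  moreover have "min \<eta>f \<eta>b > 0"
    using \<open>\<eta>f > 0\<close> \<open>\<eta>b > 0\<close> by simp
  ultimately show ?thesis
    using \<open>S > 0\<close> by (intro exI[of _ "min \<eta>f \<eta>b"] conjI[rotated] exI[of _ S])
qed

lemma pseudotraj_connects_unstable_to_stable:
  fixes \<phi> :: "real \<Rightarrow> 'a::metric_space \<Rightarrow> 'a"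
  assumes "is_flow \<phi>" "compact (UNIV :: 'a set)" "finite (limit_set \<phi>)" "limit_set \<phi> \<subseteq> Sing \<phi>"
    and "\<forall>p\<in>limit_set \<phi>. lyap_stable \<phi> p \<or> lyap_unstable \<phi> p" and "r > 0" "\<epsilon> > 0"
  shows "\<exists>d>0. \<exists>S>0. \<forall>\<xi> s0. pseudotraj \<phi> d \<xi> \<and> \<xi> s0 \<notin> (\<Union>p\<in>Sing \<phi>. ball p r) \<longrightarrow>
           (\<exists>p q. p \<in> Sing \<phi> \<and> lyap_unstable \<phi> p \<and> q \<in> Sing \<phi> \<and> lyap_stable \<phi> q
              \<and> (\<forall>t\<le>-S. \<xi> (t + s0) \<in> ball p r) \<and> (\<forall>t\<ge>S. \<xi> (t + s0) \<in> ball q r)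
              \<and> (\<forall>t\<in>{-S..2*S}. dist (\<xi> (t + s0)) (\<phi> t (\<xi> s0)) < \<epsilon>))"
proof -
  obtain \<eta> S where "\<eta> > 0" "S > 0" and connects: "\<forall>\<xi> s0.
      shadows \<phi> \<eta> S \<xi> \<and> shadows (\<lambda>t. \<phi> (- t)) \<eta> S (\<lambda>s. \<xi> (- s)) \<and> \<xi> s0 \<notin> (\<Union>p\<in>Sing \<phi>. ball p r) \<longrightarrow>
      (\<exists>p q. p \<in> Sing \<phi> \<and> lyap_unstable \<phi> p \<and> q \<in> Sing \<phi> \<and> lyap_stable \<phi> q
         \<and> (\<forall>t\<le>-S. \<xi> (t + s0) \<in> ball p r) \<and> (\<forall>t\<ge>S. \<xi> (t + s0) \<in> ball q r))"
    using shadows_connects_unstable_to_stable[OF assms(1-6)] by blast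
  define \<eta>' where "\<eta>' = min \<eta> \<epsilon>"
  have "\<eta>' > 0"
    unfolding \<eta>'_def using \<open>\<eta> > 0\<close> assms(7) by simp
  then obtain d where "d > 0" and d: "\<forall>\<xi>. pseudotraj \<phi> d \<xi> \<longrightarrow>
      shadows \<phi> \<eta>' (2 * S) \<xi> \<and> shadows (\<lambda>t. \<phi> (- t)) \<eta>' (2 * S) (\<lambda>s. \<xi> (- s))"
    using pseudotraj_shadows[OF assms(1,2)] by blast
  have "\<exists>p q. p \<in> Sing \<phi> \<and> lyap_unstable \<phi> p \<and> q \<in> Sing \<phi> \<and> lyap_stable \<phi> q
      \<and> (\<forall>t\<le>-S. \<xi> (t + s0) \<in> ball p r) \<and> (\<forall>t\<ge>S. \<xi> (t + s0) \<in> ball q r)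
      \<and> (\<forall>t\<in>{-S..2*S}. dist (\<xi> (t + s0)) (\<phi> t (\<xi> s0)) < \<epsilon>)"
    if "pseudotraj \<phi> d \<xi>" "\<xi> s0 \<notin> (\<Union>p\<in>Sing \<phi>. ball p r)" for \<xi> s0
  proof -
    have fw: "shadows \<phi> \<eta>' (2 * S) \<xi>" and bw: "shadows (\<lambda>t. \<phi> (- t)) \<eta>' (2 * S) (\<lambda>s. \<xi> (- s))"
      using d that(1) by auto
    have "shadows \<phi> \<eta> S \<xi>" "shadows (\<lambda>t. \<phi> (- t)) \<eta> S (\<lambda>s. \<xi> (- s))"
      using fw bw \<open>S > 0\<close> by (auto elim!: shadows_mono simp: \<eta>'_def)
    with connects that(2) obtain p q
      where "p \<in> Sing \<phi> \<and> lyap_unstable \<phi> p \<and> q \<in> Sing \<phi> \<and> lyap_stable \<phi> q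
        \<and> (\<forall>t\<le>-S. \<xi> (t + s0) \<in> ball p r) \<and> (\<forall>t\<ge>S. \<xi> (t + s0) \<in> ball q r)"
      by blast
    moreover have "\<forall>t\<in>{-S..2*S}. dist (\<xi> (t + s0)) (\<phi> t (\<xi> s0)) < \<epsilon>"
      using shadows_two_sided[OF fw bw, of _ s0] \<open>S > 0\<close> unfolding \<eta>'_def by auto
    ultimately show ?thesis
      by blast
  qed
  with \<open>d > 0\<close> \<open>S > 0\<close> show ?thesis
    by blast
qed

theorem mainTheorem8:
  fixes \<phi> :: "real \<Rightarrow> 'a::metric_space \<Rightarrow> 'a"
    and \<epsilon>0 r2 :: real
  assumes "compact (UNIV :: 'a set)"
    and "is_flow \<phi>"
    and "finite (limit_set \<phi>)"
    and "limit_set \<phi> \<subseteq> Sing \<phi>"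
    and "\<forall>p\<in>limit_set \<phi>. lyap_stable \<phi> p \<or> lyap_unstable \<phi> p"
    and "\<epsilon>0 > 0" and "r2 > 0"
  shows "\<exists>d1>0. \<exists>S0>0. \<forall>\<xi> s0.
           pseudotraj \<phi> d1 \<xi> \<and> \<xi> s0 \<in> UNIV - (\<Union>p\<in>Sing \<phi>. ball p r2) \<longrightarrow>
           (\<exists>p q. p \<in> Sing \<phi> \<and> lyap_unstable \<phi> p \<and> q \<in> Sing \<phi> \<and> lyap_stable \<phi> q
              \<and> (\<forall>t\<le>-S0. \<xi> (t + s0) \<in> ball p r2)
              \<and> (\<forall>t\<ge>S0. \<xi> (t + s0) \<in> ball q r2)
              \<and> (\<forall>t\<in>{-S0..2*S0}. dist (\<xi> (t + s0)) (\<phi> t (\<xi> s0)) < min r2 (\<epsilon>0 / 4)))"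
proof -
  have "min r2 (\<epsilon>0 / 4) > 0"
    using assms(6,7) by simp
  from pseudotraj_connects_unstable_to_stable[OF assms(2,1,3,4,5,7) this] show ?thesis
    by (simp only: Diff_iff UNIV_I simp_thms)
qed

end
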